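(* Let $\mathcal B=(B_1,\dots,B_d)$ be a splitting of order $d$ of $B_J\in\mathbb R^{n\times n}$ and let $r\ge0$ be an integer. Then $T(\mathcal B)$ and $T(\mathcal S^r(\mathcal B))$ have the same nonzero eigenvalues; in particular $\rho(T(\mathcal B))=\rho(T(\mathcal S^r(\mathcal B)))$.
   Context: For $B\in\mathbb R^{n\times n}$, a splitting of $B$ of order $d\ge1$ is an ordered $d$-tuple $\mathcal B=(B_1,\dots,B_d)$ of real $n\times n$ matrices with $B_p\neq O$ for all $p$, $\sum_{p=1}^d B_p=B$, and $B_p\circ B_q=O$ (Hadamard product) for $p\ne q$. The iteration matrix of $\mathcal B$ is the $dn\times dn$ matrix $T(\mathcal B)=(I_{dn}-\mathcal L)^{-1}\mathcal U$, where $\mathcal L,\mathcal U$ are $d\times d$ block matrices with $n\times n$ blocks, $\mathcal L_{ij}=B_j$ if $i>j$ and $O$ otherwise, $\mathcal U_{ij}=B_j$ if $i\le j$ and $O$ otherwise. The cyclic shift is $\mathcal S(B_1,\dots,B_d)=(B_d,B_1,\dots,B_{d-1})$, and $\mathcal S^r$ is its $r$-fold iterate. $\rho$ denotes spectral radius. *)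

theory Defs
  imports "Jordan_Normal_Form.Spectral_Radius" "Jordan_Normal_Form.Gauss_Jordan_Elimination"
begin

definition is_splitting :: "nat \<Rightarrow> real mat \<Rightarrow> real mat list \<Rightarrow> bool" where
  "is_splitting n B Bs \<longleftrightarrow>
     B \<in> carrier_mat n n \<and> length Bs \<ge> 1 \<and>
     (\<forall>p < length Bs. Bs ! p \<in> carrier_mat n n \<and> Bs ! p \<noteq> 0\<^sub>m n n) \<and>
     (\<forall>i < n. \<forall>j < n. B $$ (i, j) = (\<Sum>p < length Bs. (Bs ! p) $$ (i, j))) \<and>
     (\<forall>p < length Bs. \<forall>q < length Bs. p \<noteq> q \<longrightarrow>
        (\<forall>i < n. \<forall>j < n. (Bs ! p) $$ (i, j) * (Bs ! q) $$ (i, j) = 0))"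

text \<open>Block matrices: block (i,j) (0-indexed) of L is B_j if i > j, else O;
  block (i,j) of U is B_j if i \<le> j, else O.\<close>

definition blockL :: "nat \<Rightarrow> real mat list \<Rightarrow> real mat" where
  "blockL n Bs = mat (length Bs * n) (length Bs * n)
     (\<lambda>(i, j). if i div n > j div n then (Bs ! (j div n)) $$ (i mod n, j mod n) else 0)"

definition blockU :: "nat \<Rightarrow> real mat list \<Rightarrow> real mat" where
  "blockU n Bs = mat (length Bs * n) (length Bs * n)
     (\<lambda>(i, j). if i div n \<le> j div n then (Bs ! (j div n)) $$ (i mod n, j mod n) else 0)"

text \<open>Iteration matrix T = (I - L)^{-1} U (I - L is unit lower triangular, hence invertible).\<close>

definition iter_mat :: "nat \<Rightarrow> real mat list \<Rightarrow> real mat" where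
  "iter_mat n Bs = the (mat_inverse (1\<^sub>m (length Bs * n) - blockL n Bs)) * blockU n Bs"

definition cyc_shift :: "'a list \<Rightarrow> 'a list" where
  "cyc_shift xs = last xs # butlast xs"

definition nonzero_eigenvalues :: "real mat \<Rightarrow> complex set" where
  "nonzero_eigenvalues A = {k. k \<noteq> 0 \<and> eigenvalue (map_mat complex_of_real A) k}"

end

theory Submission
  imports Defs
begin

text \<open>Let L and U be the block lower and upper parts, so that T = (I - L)\<inverse> U. Then
  T x = k x iff (U + k L) x = k x, whose i-th block row reads
  (sum of B_j x_j over j \<ge> i) + k (sum of B_j x_j over j < i) = k x_i.
  For k \<noteq> 0 the rotated and rescaled vector (x_d, k x_1, ..., k x_(d-1)) solves this system for
  the shifted splitting, and the correspondence is invertible; hence the nonzero eigenvalues agree.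
  For matrices of equal size the spectral radius depends only on the nonzero eigenvalues.\<close>

lemma eigenvalue_inverse_mult_iff:
  fixes L U Mi :: "'a :: field mat"
  assumes L: "L \<in> carrier_mat N N" and U: "U \<in> carrier_mat N N" and Mi: "Mi \<in> carrier_mat N N"
    and right_inv: "(1\<^sub>m N - L) * Mi = 1\<^sub>m N" and left_inv: "Mi * (1\<^sub>m N - L) = 1\<^sub>m N"
  shows "eigenvalue (Mi * U) k \<longleftrightarrow> eigenvalue (U + k \<cdot>\<^sub>m L) k"
proof -
  define M where "M = 1\<^sub>m N - L"
  have M: "M \<in> carrier_mat N N" unfolding M_def using L by (rule minus_carrier_mat)
  have "(Mi * U) *\<^sub>v v = k \<cdot>\<^sub>v v \<longleftrightarrow> (U + k \<cdot>\<^sub>m L) *\<^sub>v v = k \<cdot>\<^sub>v v"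
    if v: "v \<in> carrier_vec N" for v
  proof -
    have "(Mi * U) *\<^sub>v v = k \<cdot>\<^sub>v v \<longleftrightarrow> U *\<^sub>v v = M *\<^sub>v (k \<cdot>\<^sub>v v)"
    proof
      assume "(Mi * U) *\<^sub>v v = k \<cdot>\<^sub>v v"
      then have "(M * Mi) *\<^sub>v (U *\<^sub>v v) = M *\<^sub>v (k \<cdot>\<^sub>v v)"
        using M Mi U v by simp
      then show "U *\<^sub>v v = M *\<^sub>v (k \<cdot>\<^sub>v v)"
        using U v right_inv by (simp add: M_def)
    next
      assume "U *\<^sub>v v = M *\<^sub>v (k \<cdot>\<^sub>v v)"
      then have "Mi *\<^sub>v (U *\<^sub>v v) = (Mi * M) *\<^sub>v (k \<cdot>\<^sub>v v)"
        using M Mi v by simp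
      then show "(Mi * U) *\<^sub>v v = k \<cdot>\<^sub>v v"
        using Mi U v left_inv by (simp add: M_def)
    qed
    also have "M *\<^sub>v (k \<cdot>\<^sub>v v) = k \<cdot>\<^sub>v v - k \<cdot>\<^sub>v (L *\<^sub>v v)"
      unfolding M_def using L v
      by (simp add: minus_mult_distrib_mat_vec[OF one_carrier_mat L] mult_mat_vec[OF L v])
    also have "(U + k \<cdot>\<^sub>m L) *\<^sub>v v = U *\<^sub>v v + k \<cdot>\<^sub>v (L *\<^sub>v v)"
    proof -
      have "(k \<cdot>\<^sub>m L) *\<^sub>v v = k \<cdot>\<^sub>v (L *\<^sub>v v)"
        using L v by (intro eq_vecI) (auto simp: scalar_prod_def sum_distrib_left mult.assoc)
      then show ?thesis using L U v by (simp add: add_mult_distrib_mat_vec[of U N N])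
    qed
    then have "U *\<^sub>v v = k \<cdot>\<^sub>v v - k \<cdot>\<^sub>v (L *\<^sub>v v) \<longleftrightarrow> (U + k \<cdot>\<^sub>m L) *\<^sub>v v = k \<cdot>\<^sub>v v"
      using L U v by (simp add: vec_eq_iff eq_diff_eq)
    finally show ?thesis .
  qed
  moreover have "dim_row (Mi * U) = N" "dim_row (U + k \<cdot>\<^sub>m L) = N" using Mi U L by auto
  ultimately show ?thesis unfolding eigenvalue_def eigenvector_def by metis
qed

lemma sum_lessThan_mult_blocks:
  fixes d n :: nat
  shows "(\<Sum>b<d * n. f b) = (\<Sum>j<d. \<Sum>q<n. f (j * n + q))"
proof (induction d)
  case 0
  show ?case by simp
next
  case (Suc d)
  have split: "{..<Suc d * n} = {..<d * n} \<union> {d * n..<d * n + n}" by auto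
  have "(\<Sum>b<Suc d * n. f b) = (\<Sum>b<d * n. f b) + (\<Sum>b\<in>{d * n..<d * n + n}. f b)"
    unfolding split by (rule sum.union_disjoint) auto
  also have "(\<Sum>b\<in>{d * n..<d * n + n}. f b) = (\<Sum>q<n. f (d * n + q))"
    by (rule sum.reindex_bij_witness[of _ "\<lambda>q. d * n + q" "\<lambda>b. b - d * n"]) auto
  finally show ?case using Suc.IH by simp
qed

lemma block_index_less:
  fixes i d p n :: nat
  assumes "i < d" "p < n"
  shows "i * n + p < d * n"
proof -
  have "i * n + p < Suc i * n" using assms(2) by simp
  also have "\<dots> \<le> d * n" using assms(1) by (intro mult_le_mono1) simp
  finally show ?thesis .
qed

lemma mult_mat_vec_blocks:
  assumes A: "A \<in> carrier_mat (d * n) (d * n)" and v: "v \<in> carrier_vec (d * n)" and a: "a < d * n"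
  shows "(A *\<^sub>v v) $ a = (\<Sum>j<d. \<Sum>q<n. A $$ (a, j * n + q) * v $ (j * n + q))"
proof -
  have "(A *\<^sub>v v) $ a = (\<Sum>b<d * n. A $$ (a, b) * v $ b)"
    using A v a by (auto simp: scalar_prod_def lessThan_atLeast0 intro!: sum.cong)
  then show ?thesis by (simp only: sum_lessThan_mult_blocks)
qed

lemma eigenvalue_blocks_iff:
  fixes A :: "'a :: comm_ring_1 mat"
  assumes A: "A \<in> carrier_mat (d * n) (d * n)"
  shows "eigenvalue A k \<longleftrightarrow> (\<exists>x. (\<exists>i<d. \<exists>p<n. x i p \<noteq> 0) \<and>
           (\<forall>i<d. \<forall>p<n. (\<Sum>j<d. \<Sum>q<n. A $$ (i * n + p, j * n + q) * x j q) = k * x i p))"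
    (is "_ \<longleftrightarrow> (\<exists>x. ?nonzero x \<and> ?eq x)")
proof
  assume "eigenvalue A k"
  then obtain v where v: "v \<in> carrier_vec (d * n)" "v \<noteq> 0\<^sub>v (d * n)" "A *\<^sub>v v = k \<cdot>\<^sub>v v"
    using A unfolding eigenvalue_def eigenvector_def by auto
  define x where "x j q = v $ (j * n + q)" for j q
  have eq: "?eq x"
  proof (intro allI impI)
    fix i p assume "i < d" "p < n"
    then have a: "i * n + p < d * n" by (rule block_index_less)
    then show "(\<Sum>j<d. \<Sum>q<n. A $$ (i * n + p, j * n + q) * x j q) = k * x i p"
      using v(1,3) mult_mat_vec_blocks[OF A v(1) a] by (simp add: x_def)
  qed
  obtain a where a: "a < d * n" "v $ a \<noteq> 0"
    using v(1,2) by (metis eq_vecI carrier_vecD index_zero_vec(1,2))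
  then have "0 < n" by (cases n) auto
  with a have "a div n < d" "a mod n < n" "x (a div n) (a mod n) \<noteq> 0"
    by (auto simp: x_def less_mult_imp_div_less)
  then have "?nonzero x" by blast
  with eq show "\<exists>x. ?nonzero x \<and> ?eq x" by blast
next
  assume "\<exists>x. ?nonzero x \<and> ?eq x"
  then obtain x i p where x: "i < d" "p < n" "x i p \<noteq> 0" "?eq x" by blast
  define v where "v = vec (d * n) (\<lambda>a. x (a div n) (a mod n))"
  have v: "v \<in> carrier_vec (d * n)" by (simp add: v_def)
  have v_block: "v $ (j * n + q) = x j q" if "j < d" "q < n" for j q
    using block_index_less[OF that] that by (simp add: v_def)
  have "v \<noteq> 0\<^sub>v (d * n)"
    using x block_index_less[OF x(1,2)] v_block[OF x(1,2)] by auto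
  moreover have "A *\<^sub>v v = k \<cdot>\<^sub>v v"
  proof (rule eq_vecI)
    fix a assume "a < dim_vec (k \<cdot>\<^sub>v v)"
    then have a: "a < d * n" by (simp add: v_def)
    then have n: "0 < n" by (cases n) auto
    have ip: "a div n < d" "a mod n < n" using a n by (auto simp: less_mult_imp_div_less)
    have "(A *\<^sub>v v) $ a = (\<Sum>j<d. \<Sum>q<n. A $$ (a div n * n + a mod n, j * n + q) * x j q)"
      unfolding mult_mat_vec_blocks[OF A v a] by (auto simp: v_block intro!: sum.cong)
    also have "\<dots> = k * x (a div n) (a mod n)"
      using x(4)[rule_format, OF ip] by simp
    finally show "(A *\<^sub>v v) $ a = (k \<cdot>\<^sub>v v) $ a" using a by (simp add: v_def)
  qed (use A in \<open>simp add: v_def\<close>)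
  ultimately show "eigenvalue A k"
    using A v unfolding eigenvalue_def eigenvector_def by (metis carrier_matD(1))
qed

lemma Max_norm_eq_Max_insert_zero:
  fixes S :: "'a :: real_normed_vector set"
  assumes "finite S" "S \<noteq> {}"
  shows "Max (norm ` S) = Max (insert 0 (norm ` (S - {0})))"
proof -
  have "0 \<le> Max (norm ` S)"
    using assms by (auto simp: Max_ge_iff)
  moreover have "insert 0 (norm ` (S - {0})) = insert 0 (norm ` S)" by auto
  ultimately show ?thesis using assms by (simp add: max_def)
qed

lemma spectral_radius_eq_if_nonzero_spectrum_eq:
  assumes A: "A \<in> carrier_mat N N" and A': "A' \<in> carrier_mat N N"
    and spec: "spectrum A - {0} = spectrum A' - {0}"
  shows "spectral_radius A = spectral_radius A'"
proof (cases "N = 0")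
  case True
  then have "A = A'" using A A' by (intro eq_matI) auto
  then show ?thesis by simp
next
  case False
  then have "spectrum A \<noteq> {}" "spectrum A' \<noteq> {}"
    using spectrum_non_empty A A' by auto
  with card_finite_spectrum(1)[OF A] card_finite_spectrum(1)[OF A'] spec show ?thesis
    unfolding spectral_radius_def by (simp add: Max_norm_eq_Max_insert_zero)
qed

lemma nonzero_eigenvalues_eq_spectrum:
  "nonzero_eigenvalues A = spectrum (map_mat complex_of_real A) - {0}"
  by (auto simp: nonzero_eigenvalues_def spectrum_def)

lemma blockL_carrier [simp]: "blockL n Bs \<in> carrier_mat (length Bs * n) (length Bs * n)"
  by (simp add: blockL_def)

lemma blockU_carrier [simp]: "blockU n Bs \<in> carrier_mat (length Bs * n) (length Bs * n)"
  by (simp add: blockU_def)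

lemma det_one_minus_blockL: "det (1\<^sub>m (length Bs * n) - blockL n Bs) = 1"
proof -
  define N where "N = length Bs * n"
  define M where "M = 1\<^sub>m N - blockL n Bs"
  have M: "M \<in> carrier_mat N N" unfolding M_def N_def by (rule minus_carrier_mat) simp
  have upper_zero: "M $$ (i, j) = 0" if "i < j" "j < N" for i j
  proof -
    have "i div n \<le> j div n" using that by (intro div_le_mono) simp
    then show ?thesis using that by (simp add: M_def N_def blockL_def)
  qed
  have "diag_mat M = replicate N 1"
    by (rule nth_equalityI) (auto simp: diag_mat_def M_def N_def blockL_def)
  then show ?thesis
    using det_lower_triangular[OF upper_zero M] by (simp add: M_def N_def)
qed

lemma mat_inverse_one_minus_blockL:
  obtains Mi where "mat_inverse (1\<^sub>m (length Bs * n) - blockL n Bs) = Some Mi"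
    and "(1\<^sub>m (length Bs * n) - blockL n Bs) * Mi = 1\<^sub>m (length Bs * n)"
    and "Mi * (1\<^sub>m (length Bs * n) - blockL n Bs) = 1\<^sub>m (length Bs * n)"
    and "Mi \<in> carrier_mat (length Bs * n) (length Bs * n)"
proof -
  define N where "N = length Bs * n"
  define M where "M = 1\<^sub>m N - blockL n Bs"
  have M: "M \<in> carrier_mat N N" unfolding M_def N_def by (rule minus_carrier_mat) simp
  have "M \<in> Units (ring_mat TYPE(real) N ())"
    using det_non_zero_imp_unit[OF M] det_one_minus_blockL by (simp add: M_def N_def)
  then obtain Mi where "mat_inverse M = Some Mi"
    using mat_inverse(1)[OF M] by fastforce
  with mat_inverse(2)[OF M this] that show ?thesis by (simp add: M_def N_def)
qed

lemma iter_mat_carrier: "iter_mat n Bs \<in> carrier_mat (length Bs * n) (length Bs * n)"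
proof -
  obtain Mi where "mat_inverse (1\<^sub>m (length Bs * n) - blockL n Bs) = Some Mi"
    and "Mi \<in> carrier_mat (length Bs * n) (length Bs * n)"
    by (rule mat_inverse_one_minus_blockL)
  then show ?thesis by (simp add: iter_mat_def)
qed

definition pencil_mat :: "nat \<Rightarrow> real mat list \<Rightarrow> complex \<Rightarrow> complex mat" where
  "pencil_mat n Bs k =
     map_mat complex_of_real (blockU n Bs) + k \<cdot>\<^sub>m map_mat complex_of_real (blockL n Bs)"

lemma eigenvalue_iter_mat_iff_pencil_mat:
  "eigenvalue (map_mat complex_of_real (iter_mat n Bs)) k \<longleftrightarrow> eigenvalue (pencil_mat n Bs k) k"
proof -
  define N where "N = length Bs * n"
  define c :: "real mat \<Rightarrow> complex mat" where "c = map_mat complex_of_real"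
  obtain Mi where Mi: "mat_inverse (1\<^sub>m N - blockL n Bs) = Some Mi"
    "(1\<^sub>m N - blockL n Bs) * Mi = 1\<^sub>m N" "Mi * (1\<^sub>m N - blockL n Bs) = 1\<^sub>m N" "Mi \<in> carrier_mat N N"
    unfolding N_def by (rule mat_inverse_one_minus_blockL)
  have L: "blockL n Bs \<in> carrier_mat N N" and U: "blockU n Bs \<in> carrier_mat N N"
    by (simp_all add: N_def)
  have M: "1\<^sub>m N - blockL n Bs \<in> carrier_mat N N" using L by (rule minus_carrier_mat)
  have c_M: "c (1\<^sub>m N - blockL n Bs) = 1\<^sub>m N - c (blockL n Bs)"
    using L by (intro eq_matI) (auto simp: c_def)
  have "c (iter_mat n Bs) = c Mi * c (blockU n Bs)"
    using Mi(1) of_real_hom.mat_hom_mult[OF Mi(4) U] by (simp add: iter_mat_def N_def c_def)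
  moreover have "(1\<^sub>m N - c (blockL n Bs)) * c Mi = c ((1\<^sub>m N - blockL n Bs) * Mi)"
    unfolding c_M[symmetric] unfolding c_def by (rule of_real_hom.mat_hom_mult[OF M Mi(4), symmetric])
  moreover have "c Mi * (1\<^sub>m N - c (blockL n Bs)) = c (Mi * (1\<^sub>m N - blockL n Bs))"
    unfolding c_M[symmetric] unfolding c_def by (rule of_real_hom.mat_hom_mult[OF Mi(4) M, symmetric])
  moreover have "c (1\<^sub>m N) = 1\<^sub>m N" unfolding c_def by (rule of_real_hom.mat_hom_one)
  ultimately show ?thesis
    using eigenvalue_inverse_mult_iff[of "c (blockL n Bs)" N "c (blockU n Bs)" "c Mi"] L U Mi(2-4)
    by (simp add: pencil_mat_def c_def)
qed

definition pencil_weight :: "complex \<Rightarrow> nat \<Rightarrow> nat \<Rightarrow> complex" where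
  "pencil_weight k i j = (if i \<le> j then 1 else k)"

lemma index_pencil_mat:
  assumes "i < length Bs" "j < length Bs" "p < n" "q < n"
  shows "pencil_mat n Bs k $$ (i * n + p, j * n + q) =
    pencil_weight k i j * complex_of_real (Bs ! j $$ (p, q))"
  using assms block_index_less[OF assms(1,3)] block_index_less[OF assms(2,4)]
  by (simp add: pencil_mat_def blockL_def blockU_def pencil_weight_def)

text \<open>\<open>x j p\<close> is entry \<open>p\<close> of the \<open>j\<close>-th block of an eigenvector of \<open>pencil_mat n Bs k\<close>.\<close>

definition block_eigen_eq :: "real mat list \<Rightarrow> nat \<Rightarrow> complex \<Rightarrow> (nat \<Rightarrow> nat \<Rightarrow> complex) \<Rightarrow> bool"
  where "block_eigen_eq Bs n k x \<longleftrightarrow> (\<forall>i<length Bs. \<forall>p<n.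
     (\<Sum>j<length Bs. pencil_weight k i j * (\<Sum>q<n. complex_of_real (Bs ! j $$ (p, q)) * x j q))
       = k * x i p)"

lemma eigenvalue_iter_mat_iff_block_eigen_eq:
  "eigenvalue (map_mat complex_of_real (iter_mat n Bs)) k \<longleftrightarrow>
     (\<exists>x. (\<exists>i<length Bs. \<exists>p<n. x i p \<noteq> 0) \<and> block_eigen_eq Bs n k x)"
proof -
  have row: "(\<Sum>j<length Bs. \<Sum>q<n. pencil_mat n Bs k $$ (i * n + p, j * n + q) * x j q) =
      (\<Sum>j<length Bs. pencil_weight k i j * (\<Sum>q<n. complex_of_real (Bs ! j $$ (p, q)) * x j q))"
    if "i < length Bs" "p < n" for i p x
    using that by (auto simp: index_pencil_mat sum_distrib_left mult.assoc intro!: sum.cong)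
  have "pencil_mat n Bs k \<in> carrier_mat (length Bs * n) (length Bs * n)"
    by (simp add: pencil_mat_def)
  then show ?thesis
    unfolding eigenvalue_iter_mat_iff_pencil_mat block_eigen_eq_def
    by (simp add: eigenvalue_blocks_iff row cong: conj_cong)
qed

lemma block_eigen_eq_rotate_iff:
  fixes B :: "real mat" and k :: complex
  assumes k: "k \<noteq> 0"
    and y_0: "\<And>q. y 0 q = x (length Cs) q"
    and y_Suc: "\<And>j q. j < length Cs \<Longrightarrow> y (Suc j) q = k * x j q"
  shows "block_eigen_eq (B # Cs) n k y \<longleftrightarrow> block_eigen_eq (Cs @ [B]) n k x"
proof -
  define m where "m = length Cs"
  define z where "z j p = (\<Sum>q<n. complex_of_real ((Cs @ [B]) ! j $$ (p, q)) * x j q)" for j p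
  define lhs where "lhs i p = (\<Sum>j<Suc m. pencil_weight k i j *
      (\<Sum>q<n. complex_of_real ((B # Cs) ! j $$ (p, q)) * y j q))" for i p
  define rhs where "rhs i p = (\<Sum>j<Suc m. pencil_weight k i j * z j p)" for i p
  have z_last: "(\<Sum>q<n. complex_of_real (B $$ (p, q)) * y 0 q) = z m p" for p
    by (simp add: z_def y_0 m_def nth_append)
  have z_Suc: "(\<Sum>q<n. complex_of_real (Cs ! j $$ (p, q)) * y (Suc j) q) = k * z j p"
    if "j < m" for j p
    using that by (simp add: z_def y_Suc m_def nth_append sum_distrib_left mult.left_commute)
  have lhs_eq: "lhs i p = pencil_weight k i 0 * z m p + (\<Sum>j<m. pencil_weight k i (Suc j) * (k * z j p))"
    for i p
    unfolding lhs_def sum.lessThan_Suc_shift by (simp add: z_last z_Suc cong: sum.cong_simp)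
  have rhs_eq: "rhs i p = (\<Sum>j<m. pencil_weight k i j * z j p) + pencil_weight k i m * z m p" for i p
    by (simp add: rhs_def)
  have lhs_0: "lhs 0 p = rhs m p" for p
  proof -
    have "(\<Sum>j<m. pencil_weight k m j * z j p) = (\<Sum>j<m. k * z j p)"
      by (rule sum.cong) (auto simp: pencil_weight_def)
    then show ?thesis by (simp add: lhs_eq rhs_eq pencil_weight_def add.commute)
  qed
  have lhs_Suc: "lhs (Suc i) p = k * rhs i p" if "i < m" for i p
  proof -
    have "(\<Sum>j<m. pencil_weight k (Suc i) (Suc j) * (k * z j p)) = k * (\<Sum>j<m. pencil_weight k i j * z j p)"
      by (simp add: pencil_weight_def sum_distrib_left mult.left_commute)
    moreover have "pencil_weight k (Suc i) 0 = k" "pencil_weight k i m = 1"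
      using that by (auto simp: pencil_weight_def)
    ultimately show ?thesis by (simp add: lhs_eq rhs_eq distrib_left add.commute)
  qed
  have "block_eigen_eq (B # Cs) n k y \<longleftrightarrow>
      (\<forall>p<n. lhs 0 p = k * y 0 p) \<and> (\<forall>i<m. \<forall>p<n. lhs (Suc i) p = k * y (Suc i) p)"
    unfolding block_eigen_eq_def lhs_def m_def by (auto simp: less_Suc_eq_0_disj)
  also have "\<dots> \<longleftrightarrow> (\<forall>p<n. rhs m p = k * x m p) \<and> (\<forall>i<m. \<forall>p<n. rhs i p = k * x i p)"
    \<comment> \<open>in the rows \<open>i > 0\<close> both sides carry a factor \<open>k \<noteq> 0\<close>, which cancels\<close>
    using k by (simp add: lhs_0 lhs_Suc y_0 y_Suc m_def)
  also have "\<dots> \<longleftrightarrow> block_eigen_eq (Cs @ [B]) n k x"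
    unfolding block_eigen_eq_def rhs_def z_def m_def by (auto simp: less_Suc_eq)
  finally show ?thesis .
qed

lemma nonzero_eigenvalues_iter_mat_rotate:
  "nonzero_eigenvalues (iter_mat n (Cs @ [B])) = nonzero_eigenvalues (iter_mat n (B # Cs))"
proof -
  let ?m = "length Cs"
  have rotate: "(\<exists>x. (\<exists>i<Suc ?m. \<exists>p<n. x i p \<noteq> 0) \<and> block_eigen_eq (Cs @ [B]) n k x) \<longleftrightarrow>
        (\<exists>y. (\<exists>i<Suc ?m. \<exists>p<n. y i p \<noteq> 0) \<and> block_eigen_eq (B # Cs) n k y)"
    if k: "k \<noteq> 0" for k
  proof
    assume "\<exists>x. (\<exists>i<Suc ?m. \<exists>p<n. x i p \<noteq> 0) \<and> block_eigen_eq (Cs @ [B]) n k x"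
    then obtain x i p where x: "i < Suc ?m" "p < n" "x i p \<noteq> 0" "block_eigen_eq (Cs @ [B]) n k x"
      by blast
    define y where "y j q = (if j = 0 then x ?m q else k * x (j - 1) q)" for j q
    have "block_eigen_eq (B # Cs) n k y"
      using x(4) block_eigen_eq_rotate_iff[OF k, of y x] by (simp add: y_def)
    moreover have "y (if i = ?m then 0 else Suc i) p \<noteq> 0"
      using x k by (cases "i = ?m") (auto simp: y_def)
    moreover have "(if i = ?m then 0 else Suc i) < Suc ?m" using x(1) by simp
    ultimately show "\<exists>y. (\<exists>i<Suc ?m. \<exists>p<n. y i p \<noteq> 0) \<and> block_eigen_eq (B # Cs) n k y"
      using x(2) by blast
  next
    assume "\<exists>y. (\<exists>i<Suc ?m. \<exists>p<n. y i p \<noteq> 0) \<and> block_eigen_eq (B # Cs) n k y"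
    then obtain y i p where y: "i < Suc ?m" "p < n" "y i p \<noteq> 0" "block_eigen_eq (B # Cs) n k y"
      by blast
    define x where "x j q = (if j = ?m then y 0 q else y (Suc j) q / k)" for j q
    have "block_eigen_eq (Cs @ [B]) n k x"
      using y(4) block_eigen_eq_rotate_iff[OF k, of y x] k by (simp add: x_def)
    moreover have "x (if i = 0 then ?m else i - 1) p \<noteq> 0"
      using y k by (cases i) (auto simp: x_def)
    moreover have "(if i = 0 then ?m else i - 1) < Suc ?m" using y(1) by auto
    ultimately show "\<exists>x. (\<exists>i<Suc ?m. \<exists>p<n. x i p \<noteq> 0) \<and> block_eigen_eq (Cs @ [B]) n k x"
      using y(2) by blast
  qed
  show ?thesis
    unfolding nonzero_eigenvalues_def eigenvalue_iter_mat_iff_block_eigen_eq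
    by (intro Collect_cong conj_cong refl) (simp_all add: rotate)
qed

lemma nonzero_eigenvalues_iter_mat_cyc_shift:
  "xs \<noteq> [] \<Longrightarrow> nonzero_eigenvalues (iter_mat n (cyc_shift xs)) = nonzero_eigenvalues (iter_mat n xs)"
  by (metis append_butlast_last_id cyc_shift_def nonzero_eigenvalues_iter_mat_rotate)

lemma funpow_cyc_shift_nonempty_same_length:
  "xs \<noteq> [] \<Longrightarrow> (cyc_shift ^^ r) xs \<noteq> [] \<and> length ((cyc_shift ^^ r) xs) = length xs"
  by (induction r) (auto simp: cyc_shift_def)

lemma nonzero_eigenvalues_iter_mat_funpow_cyc_shift:
  assumes "xs \<noteq> []"
  shows "nonzero_eigenvalues (iter_mat n ((cyc_shift ^^ r) xs)) = nonzero_eigenvalues (iter_mat n xs)"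
proof (induction r)
  case 0
  show ?case by simp
next
  case (Suc r)
  then show ?case
    using funpow_cyc_shift_nonempty_same_length[OF assms] nonzero_eigenvalues_iter_mat_cyc_shift by simp
qed

theorem corollary2p1:
  fixes n r :: nat and BJ :: "real mat" and Bs :: "real mat list"
  assumes "is_splitting n BJ Bs"
  shows "nonzero_eigenvalues (iter_mat n Bs) = nonzero_eigenvalues (iter_mat n ((cyc_shift ^^ r) Bs))
         \<and> spectral_radius (map_mat complex_of_real (iter_mat n Bs))
           = spectral_radius (map_mat complex_of_real (iter_mat n ((cyc_shift ^^ r) Bs)))"
proof -
  have ne: "Bs \<noteq> []" using assms by (auto simp: is_splitting_def)
  have nz: "nonzero_eigenvalues (iter_mat n Bs) = nonzero_eigenvalues (iter_mat n ((cyc_shift ^^ r) Bs))"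
    and len: "length ((cyc_shift ^^ r) Bs) = length Bs"
    using nonzero_eigenvalues_iter_mat_funpow_cyc_shift[OF ne] funpow_cyc_shift_nonempty_same_length[OF ne] by auto
  have "spectral_radius (map_mat complex_of_real (iter_mat n Bs))
      = spectral_radius (map_mat complex_of_real (iter_mat n ((cyc_shift ^^ r) Bs)))"
    using iter_mat_carrier[of n Bs] iter_mat_carrier[of n "(cyc_shift ^^ r) Bs"] len nz
    by (intro spectral_radius_eq_if_nonzero_spectrum_eq[of _ "length Bs * n"])
       (auto simp: nonzero_eigenvalues_eq_spectrum)
  with nz show ?thesis ..
qed

end
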